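(* In the finite element setting described in the context, let each element mass matrix $M_e$ be symmetric positive definite, fix an integer $0<r<m$, and assume $\lambda_{m-r}(K_e,M_e)>0$ for every element $e$. For each element define $$\overline{M}_e=M_e+V_e\,g(D_{e,2})\,V_e^T,\qquad V_e=M_eU_{e,2},\qquad g(\lambda)=\frac{\lambda}{\lambda_{m-r}(K_e,M_e)}-1,$$ where $D_{e,2}=\mathrm{diag}(\lambda_{m-r+1}(K_e,M_e),\dots,\lambda_m(K_e,M_e))$ and $U_{e,2}\in\mathbb{R}^{m\times r}$ has as columns the corresponding $M_e$-orthonormal eigenvectors of $(K_e,M_e)$ ($g$ applied entrywise to the diagonal). Let $M=\sum_eL_e^TM_eL_e$ and $\overline{M}=\sum_eL_e^T\overline{M}_eL_e$. Then for all $i=1,\dots,n$, $$1\le\frac{\omega_i}{\overline{\omega}_i}\le\max_e\frac{\omega_{m,e}}{\omega_{m-r,e}},$$ where $\omega_i=\sqrt{\lambda_i(K,M)}$, $\overline{\omega}_i=\sqrt{\lambda_i(K,\overline{M})}$ and $\omega_{j,e}=\sqrt{\lambda_j(K_e,M_e)}$.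
   Context: Finite element setting: there are $n$ global degrees of freedom and $N$ elements, each with $m$ local degrees of freedom. For each element $e$, $L_e\in\mathbb{R}^{m\times n}$ satisfies $L_e^T=[\mathbf{e}_{i_1},\dots,\mathbf{e}_{i_m}]$ for distinct indices $i_1,\dots,i_m$ (columns of $I_n$), and every global index appears for at least one element. Element matrices are assembled as $A=\sum_{e=1}^N L_e^TA_eL_e$. The global stiffness matrix is $K=\sum_e L_e^TK_eL_e$ with each $K_e$ symmetric positive semidefinite, and $K$ is assumed symmetric positive definite. Generalized eigenvalues of a pair ($A$ symmetric, $B$ symmetric positive definite) are numbered in ascending order; "$M_e$-orthonormal" means $U_{e,2}^TM_eU_{e,2}=I_r$. *)

theory Defs
  imports "HOL-Analysis.Analysis" "HOL-Computational_Algebra.Polynomial"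
begin

definition gen_charpoly :: "real^'n^'n \<Rightarrow> real^'n^'n \<Rightarrow> real poly" where
  "gen_charpoly A B = det (\<chi> i j. [: A$i$j, - (B$i$j) :])"

text \<open>Generalized eigenvalues of (A,B) counted with algebraic multiplicity, in ascending order;
  gev A B i is the i-th one (1-based, i = 1..CARD('n)).\<close>
definition gev :: "real^'n^'n \<Rightarrow> real^'n^'n \<Rightarrow> nat \<Rightarrow> real" where
  "gev A B i = sorted_list_of_multiset (proots (gen_charpoly A B)) ! (i - 1)"

definition sym_mat :: "real^'n^'n \<Rightarrow> bool" where
  "sym_mat A \<longleftrightarrow> transpose A = A"

definition psd_mat :: "real^'n^'n \<Rightarrow> bool" where
  "psd_mat A \<longleftrightarrow> sym_mat A \<and> (\<forall>x. 0 \<le> x \<bullet> (A *v x))"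

definition pd_mat :: "real^'n^'n \<Rightarrow> bool" where
  "pd_mat A \<longleftrightarrow> sym_mat A \<and> (\<forall>x. x \<noteq> 0 \<longrightarrow> 0 < x \<bullet> (A *v x))"

definition outer :: "real^'m \<Rightarrow> real^'m \<Rightarrow> real^'m^'m" where
  "outer v w = (\<chi> i j. v$i * w$j)"

definition assemble :: "('e::finite \<Rightarrow> real^'n^'m) \<Rightarrow> ('e \<Rightarrow> real^'m^'m) \<Rightarrow> real^'n^'n" where
  "assemble L A = (\<Sum>e\<in>UNIV. transpose (L e) ** A e ** L e)"

text \<open>Modified element mass matrix  M_e + V g(D_2) V^T  with V = M_e U_2, written as a
  sum over the r columns u_1..u_r of U_2 (eigenvalues lambda_{m-r+k}).\<close>
definition mod_mass :: "real^'m^'m \<Rightarrow> real^'m^'m \<Rightarrow> nat \<Rightarrow> (nat \<Rightarrow> real^'m) \<Rightarrow> real^'m^'m" where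
  "mod_mass Ke Me r u = Me + (\<Sum>k\<in>{1..r}.
      (gev Ke Me (CARD('m) - r + k) / gev Ke Me (CARD('m) - r) - 1) *\<^sub>R outer (Me *v u k) (Me *v u k))"

end

theory Submission
  imports Defs
begin

text \<open>
  Element by element, the modified mass matrix lies between \<open>M\<^sub>e\<close> and \<open>\<rho>\<^sub>e M\<^sub>e\<close> in the
  Loewner order, where \<open>\<rho>\<^sub>e = \<lambda>\<^sub>m(K\<^sub>e,M\<^sub>e) / \<lambda>\<^sub>m\<^sub>-\<^sub>r(K\<^sub>e,M\<^sub>e)\<close>: on the span of the top
  \<open>r\<close> eigenvectors the quadratic form is rescaled by \<open>\<lambda>\<^sub>m\<^sub>-\<^sub>r\<^sub>+\<^sub>k / \<lambda>\<^sub>m\<^sub>-\<^sub>r \<in> [1, \<rho>\<^sub>e]\<close>, and by Bessel's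
  inequality the remaining part is untouched. Assembly preserves these bounds, so
  \<open>M \<le> M\<^sub>b\<^sub>a\<^sub>r \<le> (max\<^sub>e \<rho>\<^sub>e) M\<close>. By the Courant--Fischer min-max principle, the \<open>i\<close>-th
  generalized eigenvalue of \<open>(K, M)\<close> is antitone in \<open>M\<close> and scales inversely with it, which
  gives \<open>\<lambda>\<^sub>i(K,M\<^sub>b\<^sub>a\<^sub>r) \<le> \<lambda>\<^sub>i(K,M) \<le> (max\<^sub>e \<rho>\<^sub>e) \<lambda>\<^sub>i(K,M\<^sub>b\<^sub>a\<^sub>r)\<close>; taking square roots yields the claim.
  The min-max principle is derived from a Rayleigh-quotient construction of an
  \<open>M\<close>-orthonormal eigenbasis, which also identifies its eigenvalues with the sorted roots of
  \<open>det (K - x M)\<close>, i.e. with \<open>gev K M\<close>.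
\<close>

section \<open>Quadratic forms\<close>

lemma sym_mat_inner_commute:
  assumes "sym_mat A" shows "x \<bullet> (A *v y) = y \<bullet> (A *v (x::real^'n))"
proof -
  have "x \<bullet> (A *v y) = (x v* A) \<bullet> y" by (simp add: dot_lmul_matrix)
  also have "x v* A = transpose A *v x" by simp
  also have "\<dots> = A *v x" using assms by (simp add: sym_mat_def)
  finally show ?thesis by (simp add: inner_commute)
qed

lemma matrix_vector_sum: "A *v (\<Sum>i\<in>S. f i) = (\<Sum>i\<in>S. A *v f i)"
  for A :: "real^'n^'m"
  by (rule linear_sum[OF matrix_vector_mul_linear])

lemma sum_matrix_vector: "(\<Sum>i\<in>S. f i) *v x = (\<Sum>i\<in>S. f i *v x)"
  by (induction S rule: infinite_finite_induct) (auto simp: matrix_vector_mult_add_rdistrib)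

lemma quad_form_scaleR: "(c *\<^sub>R x) \<bullet> (A *v (c *\<^sub>R x)) = c\<^sup>2 * (x \<bullet> (A *v (x::real^'n)))"
  by (simp add: matrix_vector_mult_scaleR power2_eq_square)

lemma quad_form_add_scaleR:
  assumes "sym_mat A"
  shows "(w + t *\<^sub>R y) \<bullet> (A *v (w + t *\<^sub>R y)) =
     w \<bullet> (A *v w) + 2*t*(y \<bullet> (A *v w)) + t\<^sup>2*(y \<bullet> (A *v (y::real^'n)))"
  using sym_mat_inner_commute[OF assms, of w y]
  by (simp add: matrix_vector_right_distrib matrix_vector_mult_scaleR inner_add_left
      inner_add_right power2_eq_square algebra_simps)

lemma continuous_on_quad_form: "continuous_on S (\<lambda>x. x \<bullet> (A *v (x::real^'n)))"
  by (intro continuous_intros linear_continuous_on[OF bounded_linearI'])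
     (auto simp: matrix_vector_right_distrib matrix_vector_mult_scaleR)

lemma pd_mat_quad_nonneg: "pd_mat A \<Longrightarrow> 0 \<le> x \<bullet> (A *v x)"
  unfolding pd_mat_def by (cases "x = 0") (auto intro: less_imp_le)

lemma pd_mat_imp_psd_mat: "pd_mat A \<Longrightarrow> psd_mat A"
  unfolding psd_mat_def using pd_mat_quad_nonneg by (auto simp: pd_mat_def)

lemma pd_mat_if_quad_ge:
  assumes "sym_mat A" "pd_mat M" "\<And>x. x \<bullet> (M *v x) \<le> x \<bullet> (A *v x)"
  shows "pd_mat A"
  using assms unfolding pd_mat_def by (meson less_le_trans)

lemma M_orthonormal_sum_coeff:
  fixes M :: "real^'n^'n"
  assumes "\<And>j l. j \<in> S \<Longrightarrow> l \<in> S \<Longrightarrow> v j \<bullet> (M *v v l) = (if j = l then 1 else 0)"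
    and "finite S" "j \<in> S"
  shows "v j \<bullet> (M *v (\<Sum>l\<in>S. a l *\<^sub>R v l)) = a j"
proof -
  have "v j \<bullet> (M *v (\<Sum>l\<in>S. a l *\<^sub>R v l)) = (\<Sum>l\<in>S. a l * (v j \<bullet> (M *v v l)))"
    by (simp add: matrix_vector_sum inner_sum_right matrix_vector_mult_scaleR)
  also have "\<dots> = (\<Sum>l\<in>S. if l = j then a l else 0)"
    using assms by (intro sum.cong) auto
  also have "\<dots> = a j" using assms by simp
  finally show ?thesis .
qed

lemma nonneg_quadratic_imp_linear_coeff_zero:
  fixes a b :: real
  assumes "\<And>t. 0 \<le> 2*t*a + t\<^sup>2*b" shows "a = 0"
proof (rule ccontr)
  assume a: "a \<noteq> 0"
  define B where "B = \<bar>b\<bar> + 1"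
  have pos: "B > 0" unfolding B_def by simp
  define t where "t = - a / B"
  have "2*t*a + t\<^sup>2*b = (a\<^sup>2 / B\<^sup>2) * (b - 2*B)"
    unfolding t_def using pos by (simp add: field_simps power2_eq_square)
  also have "\<dots> < 0"
  proof (rule mult_pos_neg)
    show "0 < a\<^sup>2 / B\<^sup>2" using a pos by simp
    show "b - 2*B < 0" unfolding B_def by (simp add: abs_if)
  qed
  finally show False using assms[of t] by simp
qed

lemma subspace_orthogonal_nonzero:
  fixes w :: "nat \<Rightarrow> real^'n"
  assumes B: "subspace B" and dimB: "p < dim B"
  shows "\<exists>x\<in>B. x \<noteq> 0 \<and> (\<forall>l<p. w l \<bullet> x = 0)"
proof -
  define A where "A = span (w ` {..<p})"
  define C where "C = {y \<in> UNIV. \<forall>x\<in>A. orthogonal x y}"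
  have "dim C + dim A = dim (UNIV :: (real^'n) set)"
    unfolding C_def A_def by (rule dim_subspace_orthogonal_to_vectors) auto
  moreover have "dim A \<le> p"
  proof -
    have "dim (w ` {..<p}) \<le> card (w ` {..<p})"
      by (rule dim_le_card) (auto intro: span_base)
    then show ?thesis unfolding A_def using card_image_le[of "{..<p}" w] by (simp add: dim_span)
  qed
  moreover have "subspace C" unfolding C_def using subspace_orthogonal_to_vectors[of A] by simp
  then have "dim {x + y |x y. x \<in> B \<and> y \<in> C} + dim (B \<inter> C) = dim B + dim C"
    by (rule dim_sums_Int[OF B])
  moreover have "dim {x + y |x y. x \<in> B \<and> y \<in> C} \<le> dim (UNIV :: (real^'n) set)"
    using dim_subset_UNIV[of "{x + y |x y. x \<in> B \<and> y \<in> C}"] by simp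
  ultimately have "dim (B \<inter> C) > 0" using dimB by linarith
  then have "\<not> B \<inter> C \<subseteq> {0}" by (simp only: dim_eq_0[symmetric])
  then obtain x where "x \<in> B" "x \<in> C" "x \<noteq> 0" by blast
  then show ?thesis unfolding C_def A_def by (auto simp: orthogonal_def intro: span_base)
qed

section \<open>Rayleigh quotients and the eigenbasis of a pencil\<close>

lemma rayleigh_min_exists:
  fixes K M :: "real^'n^'n"
  assumes pdM: "pd_mat M" and W: "subspace W" and "z \<in> W" "z \<noteq> 0"
  shows "\<exists>w c. w \<in> W \<and> w \<noteq> 0 \<and> w \<bullet> (K *v w) = c * (w \<bullet> (M *v w))
               \<and> (\<forall>x\<in>W. c * (x \<bullet> (M *v x)) \<le> x \<bullet> (K *v x))"
proof -
  have Mpos: "\<And>x. x \<noteq> 0 \<Longrightarrow> 0 < x \<bullet> (M *v x)" using pdM by (simp add: pd_mat_def)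
  define S where "S = W \<inter> sphere 0 1"
  define R where "R x = (x \<bullet> (K *v x)) / (x \<bullet> (M *v x))" for x
  have R_normalize: "R ((1 / norm x) *\<^sub>R x) = R x" if "x \<noteq> 0" for x
    unfolding R_def quad_form_scaleR using that by simp
  have normalize_in_S: "(1 / norm x) *\<^sub>R x \<in> S" if "x \<in> W" "x \<noteq> 0" for x
    unfolding S_def using that subspace_scale[OF W] by simp
  have "compact S" unfolding S_def by (rule closed_Int_compact[OF closed_subspace[OF W] compact_sphere])
  moreover have "S \<noteq> {}" using normalize_in_S[OF assms(3,4)] by auto
  moreover have "continuous_on S R"
  proof -
    have "\<forall>x\<in>S. x \<bullet> (M *v x) \<noteq> 0"
    proof
      fix x assume "x \<in> S"
      then have "x \<noteq> 0" unfolding S_def by auto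
      then show "x \<bullet> (M *v x) \<noteq> 0" using Mpos by force
    qed
    then show ?thesis unfolding R_def by (intro continuous_on_divide continuous_on_quad_form)
  qed
  ultimately obtain w where wS: "w \<in> S" and wmin: "\<And>y. y \<in> S \<Longrightarrow> R w \<le> R y"
    using continuous_attains_inf[of S R] by auto
  have "w \<in> W" "w \<noteq> 0" using wS unfolding S_def by auto
  moreover have "w \<bullet> (K *v w) = R w * (w \<bullet> (M *v w))"
    unfolding R_def using Mpos[OF \<open>w \<noteq> 0\<close>] by simp
  moreover have "R w * (x \<bullet> (M *v x)) \<le> x \<bullet> (K *v x)" if "x \<in> W" for x
  proof (cases "x = 0")
    case False
    then have "R w \<le> R x" using wmin[OF normalize_in_S[OF that False]] R_normalize by simp
    then show ?thesis unfolding R_def using Mpos[OF False] by (simp add: pos_le_divide_eq)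
  qed simp
  ultimately show ?thesis by blast
qed

lemma rayleigh_min_stationary:
  fixes K M :: "real^'n^'n"
  assumes symK: "sym_mat K" and symM: "sym_mat M" and W: "subspace W" and "w \<in> W" "y \<in> W"
    and cw: "w \<bullet> (K *v w) = c * (w \<bullet> (M *v w))"
    and min: "\<And>x. x \<in> W \<Longrightarrow> c * (x \<bullet> (M *v x)) \<le> x \<bullet> (K *v x)"
  shows "y \<bullet> (K *v w) = c * (y \<bullet> (M *v w))"
proof -
  have "0 \<le> 2*t*(y \<bullet> (K *v w) - c * (y \<bullet> (M *v w))) + t\<^sup>2*(y \<bullet> (K *v y) - c * (y \<bullet> (M *v y)))" for t
  proof -
    have "w + t *\<^sub>R y \<in> W" using W \<open>w \<in> W\<close> \<open>y \<in> W\<close> by (simp add: subspace_add subspace_scale)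
    from min[OF this] show ?thesis
      unfolding quad_form_add_scaleR[OF symK] quad_form_add_scaleR[OF symM]
      using cw by (simp add: algebra_simps)
  qed
  then have "y \<bullet> (K *v w) - c * (y \<bullet> (M *v w)) = 0"
    by (rule nonneg_quadratic_imp_linear_coeff_zero)
  then show ?thesis by simp
qed

definition M_complement :: "real^'n^'n \<Rightarrow> nat \<Rightarrow> (nat \<Rightarrow> real^'n) \<Rightarrow> (real^'n) set" where
  "M_complement M k v = {x. \<forall>l<k. v l \<bullet> (M *v x) = 0}"

lemma subspace_M_complement: "subspace (M_complement M k v)"
  unfolding subspace_def M_complement_def
  by (auto simp: matrix_vector_right_distrib matrix_vector_mult_scaleR inner_add_right)

text \<open>
  Eigenpairs are indexed from \<open>0\<close>, whereas \<open>gev\<close> counts from \<open>1\<close>. The last clause, minimality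
  of the Rayleigh quotient on the complement of the earlier eigenvectors, is what lets the
  construction proceed one eigenpair at a time.
\<close>
definition eigenpairs :: "real^'n^'n \<Rightarrow> real^'n^'n \<Rightarrow> nat \<Rightarrow> (nat \<Rightarrow> real^'n) \<Rightarrow> (nat \<Rightarrow> real) \<Rightarrow> bool" where
  "eigenpairs K M k v \<mu> \<longleftrightarrow>
     (\<forall>j<k. K *v v j = \<mu> j *\<^sub>R (M *v v j))
   \<and> (\<forall>j<k. \<forall>l<k. v j \<bullet> (M *v v l) = (if j = l then 1 else 0))
   \<and> (\<forall>j l. j \<le> l \<longrightarrow> l < k \<longrightarrow> \<mu> j \<le> \<mu> l)
   \<and> (\<forall>j<k. \<forall>x\<in>M_complement M j v. \<mu> j * (x \<bullet> (M *v x)) \<le> x \<bullet> (K *v x))"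

lemma eigenvector_if_stationary_on_M_complement:
  fixes K M :: "real^'n^'n"
  assumes symK: "sym_mat K" and symM: "sym_mat M"
    and eig: "\<And>j. j < k \<Longrightarrow> K *v v j = \<mu> j *\<^sub>R (M *v v j)"
    and orth: "\<And>j l. j < k \<Longrightarrow> l < k \<Longrightarrow> v j \<bullet> (M *v v l) = (if j = l then 1 else 0)"
    and wW: "w \<in> M_complement M k v"
    and stat: "\<And>y. y \<in> M_complement M k v \<Longrightarrow> y \<bullet> (K *v w) = c * (y \<bullet> (M *v w))"
  shows "K *v w = c *\<^sub>R (M *v w)"
proof -
  define d where "d = K *v w - c *\<^sub>R (M *v w)"
  have vd: "v l \<bullet> d = 0" if "l < k" for l
  proof -
    have "v l \<bullet> (K *v w) = \<mu> l * (w \<bullet> (M *v v l))"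
      using sym_mat_inner_commute[OF symK] eig[OF that] by simp
    also have "w \<bullet> (M *v v l) = 0"
      using wW that sym_mat_inner_commute[OF symM] by (simp add: M_complement_def)
    finally show ?thesis
      unfolding d_def using wW that by (simp add: M_complement_def inner_diff_right)
  qed
  \<comment> \<open>Removing from \<open>d\<close> its \<open>M\<close>-projection \<open>p\<close> lands in the complement, where stationarity
    makes \<open>d - p\<close> orthogonal to \<open>d\<close>; and \<open>p\<close> is orthogonal to \<open>d\<close> by \<open>vd\<close>.\<close>
  define p where "p = (\<Sum>l<k. (v l \<bullet> (M *v d)) *\<^sub>R v l)"
  have "v j \<bullet> (M *v p) = v j \<bullet> (M *v d)" if "j < k" for j
    unfolding p_def using M_orthonormal_sum_coeff[of "{..<k}" v M] orth that by simp
  then have "d - p \<in> M_complement M k v"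
    by (simp add: M_complement_def matrix_vector_mult_diff_distrib inner_diff_right)
  then have "(d - p) \<bullet> d = 0" unfolding d_def using stat by (simp add: inner_diff_right)
  moreover have "p \<bullet> d = 0" unfolding p_def by (simp add: inner_sum_left vd)
  ultimately have "d \<bullet> d = 0" by (simp add: inner_diff_left)
  then show ?thesis unfolding d_def by simp
qed

lemma eigenpairs_SucI:
  fixes K M :: "real^'n^'n"
  assumes symM: "sym_mat M" and E: "eigenpairs K M k v \<mu>"
    and eig: "K *v w = c *\<^sub>R (M *v w)" and unit: "w \<bullet> (M *v w) = 1"
    and wW: "w \<in> M_complement M k v"
    and min: "\<And>x. x \<in> M_complement M k v \<Longrightarrow> c * (x \<bullet> (M *v x)) \<le> x \<bullet> (K *v x)"
  shows "eigenpairs K M (Suc k) (v(k := w)) (\<mu>(k := c))"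
proof -
  have Eeig: "\<And>j. j < k \<Longrightarrow> K *v v j = \<mu> j *\<^sub>R (M *v v j)"
   and Eon: "\<And>j l. j < k \<Longrightarrow> l < k \<Longrightarrow> v j \<bullet> (M *v v l) = (if j = l then 1 else 0)"
   and Esort: "\<And>j l. j \<le> l \<Longrightarrow> l < k \<Longrightarrow> \<mu> j \<le> \<mu> l"
   and Emin: "\<And>j x. j < k \<Longrightarrow> x \<in> M_complement M j v \<Longrightarrow> \<mu> j * (x \<bullet> (M *v x)) \<le> x \<bullet> (K *v x)"
    using E unfolding eigenpairs_def by auto
  have worth: "v l \<bullet> (M *v w) = 0" "w \<bullet> (M *v v l) = 0" if "l < k" for l
    using wW that sym_mat_inner_commute[OF symM] by (auto simp: M_complement_def)
  have csort: "\<mu> j \<le> c" if "j < k" for j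
  proof -
    have "k - 1 < k" "w \<in> M_complement M (k - 1) v"
      using that wW unfolding M_complement_def by auto
    from Emin[OF this] have "\<mu> (k - 1) \<le> w \<bullet> (K *v w)" using unit by simp
    also have "\<dots> = c" using eig unit by simp
    moreover have "\<mu> j \<le> \<mu> (k - 1)" using Esort[of j "k - 1"] that by simp
    ultimately show ?thesis by simp
  qed
  show ?thesis
    unfolding eigenpairs_def
  proof (intro conjI allI impI ballI)
    fix j assume "j < Suc k"
    then show "K *v (v(k := w)) j = (\<mu>(k := c)) j *\<^sub>R (M *v (v(k := w)) j)"
      using Eeig eig by (cases "j = k") auto
  next
    fix j l assume "j < Suc k" "l < Suc k"
    then show "(v(k := w)) j \<bullet> (M *v (v(k := w)) l) = (if j = l then 1 else 0)"
      using Eon unit worth by (cases "j = k"; cases "l = k") auto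
  next
    fix j l assume "j \<le> l" "l < Suc k"
    then show "(\<mu>(k := c)) j \<le> (\<mu>(k := c)) l"
      using Esort csort by (cases "j = k"; cases "l = k") auto
  next
    fix j x assume "j < Suc k" and "x \<in> M_complement M j (v(k := w))"
    then show "(\<mu>(k := c)) j * (x \<bullet> (M *v x)) \<le> x \<bullet> (K *v x)"
      using min Emin by (cases "j = k") (auto simp: M_complement_def)
  qed
qed

lemma eigenpairs_extend:
  fixes K M :: "real^'n^'n"
  assumes symK: "sym_mat K" and pdM: "pd_mat M" and E: "eigenpairs K M k v \<mu>"
    and kn: "k < CARD('n)"
  shows "\<exists>w c. eigenpairs K M (Suc k) (v(k := w)) (\<mu>(k := c))"
proof -
  have symM: "sym_mat M" using pdM by (simp add: pd_mat_def)
  define W where "W = M_complement M k v"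
  have subW: "subspace W" unfolding W_def by (rule subspace_M_complement)
  obtain z where "z \<in> W" "z \<noteq> 0"
    using subspace_orthogonal_nonzero[of UNIV k "\<lambda>l. M *v v l"] kn
    by (auto simp: W_def M_complement_def sym_mat_inner_commute[OF symM] inner_commute)
  then obtain w c where wW: "w \<in> W" and "w \<noteq> 0" and cw: "w \<bullet> (K *v w) = c * (w \<bullet> (M *v w))"
    and cmin: "\<And>x. x \<in> W \<Longrightarrow> c * (x \<bullet> (M *v x)) \<le> x \<bullet> (K *v x)"
    using rayleigh_min_exists[OF pdM subW] by blast
  have "K *v w = c *\<^sub>R (M *v w)"
  proof (rule eigenvector_if_stationary_on_M_complement[OF symK symM])
    show "K *v v j = \<mu> j *\<^sub>R (M *v v j)" if "j < k" for j
      using E that unfolding eigenpairs_def by blast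
    show "v j \<bullet> (M *v v l) = (if j = l then 1 else 0)" if "j < k" "l < k" for j l
      using E that unfolding eigenpairs_def by blast
    show "w \<in> M_complement M k v" using wW unfolding W_def .
    show "y \<bullet> (K *v w) = c * (y \<bullet> (M *v w))" if "y \<in> M_complement M k v" for y
      using rayleigh_min_stationary[OF symK symM subW wW _ cw cmin] that unfolding W_def .
  qed
  moreover have "0 < w \<bullet> (M *v w)" using pdM \<open>w \<noteq> 0\<close> by (simp add: pd_mat_def)
  moreover define w' where "w' = (1 / sqrt (w \<bullet> (M *v w))) *\<^sub>R w"
  ultimately have "K *v w' = c *\<^sub>R (M *v w')" and "w' \<bullet> (M *v w') = 1"
    unfolding w'_def quad_form_scaleR by (simp_all add: matrix_vector_mult_scaleR power_divide)
  moreover have "w' \<in> M_complement M k v"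
    unfolding w'_def using subspace_scale[OF subW wW] unfolding W_def .
  ultimately have "eigenpairs K M (Suc k) (v(k := w')) (\<mu>(k := c))"
    using cmin unfolding W_def by (intro eigenpairs_SucI[OF symM E])
  then show ?thesis by blast
qed

lemma eigenpairs_exist:
  fixes K M :: "real^'n^'n"
  assumes "sym_mat K" "pd_mat M"
  shows "\<exists>v \<mu>. eigenpairs K M CARD('n) v \<mu>"
proof -
  have "k \<le> CARD('n) \<Longrightarrow> \<exists>v \<mu>. eigenpairs K M k v \<mu>" for k
  proof (induction k)
    case 0 then show ?case by (auto simp: eigenpairs_def)
  next
    case (Suc k) then show ?case using eigenpairs_extend[OF assms] by fastforce
  qed
  then show ?thesis by simp
qed

section \<open>The eigenvalues are the roots of the characteristic polynomial\<close>

lemma poly_det: "poly (det A) x = det (\<chi> i j. poly (A$i$j) x)"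
  unfolding det_def by (simp add: poly_sum poly_prod)

lemma poly_gen_charpoly: "poly (gen_charpoly K M) x = det (K - x *\<^sub>R M)"
  unfolding gen_charpoly_def poly_det
  by (rule arg_cong[where f=det]) (simp add: vec_eq_iff algebra_simps)

lemma transpose_mult_mult_nth:
  "(transpose V ** A ** V) $ a $ b = column a V \<bullet> (A *v column b (V::real^'n^'n))"
proof -
  have "(transpose V ** A ** V) $ a $ b = (\<Sum>k\<in>UNIV. \<Sum>j\<in>UNIV. V$j$a * A$j$k * V$k$b)"
    by (simp add: matrix_matrix_mult_def transpose_def sum_distrib_right)
  also have "\<dots> = (\<Sum>j\<in>UNIV. \<Sum>k\<in>UNIV. V$j$a * A$j$k * V$k$b)" by (rule sum.swap)
  also have "\<dots> = column a V \<bullet> (A *v column b V)"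
    by (simp add: matrix_vector_mult_def inner_vec_def column_def sum_distrib_left mult.assoc)
  finally show ?thesis .
qed

text \<open>
  With \<open>V\<close> the matrix of eigenvectors, \<open>V\<^sup>T M V = I\<close> and \<open>V\<^sup>T (K - x M) V\<close> is diagonal, so
  \<open>det (K - x M)\<close> is a nonzero multiple of \<open>\<Prod>\<^sub>j (\<mu> j - x)\<close>.
\<close>
lemma proots_gen_charpoly:
  fixes K M :: "real^'n^'n"
  assumes E: "eigenpairs K M CARD('n) v \<mu>"
  shows "proots (gen_charpoly K M) = mset (map \<mu> [0..<CARD('n)])"
proof -
  let ?n = "CARD('n)"
  have Eeig: "\<And>j. j < ?n \<Longrightarrow> K *v v j = \<mu> j *\<^sub>R (M *v v j)"
   and Eon: "\<And>j l. j < ?n \<Longrightarrow> l < ?n \<Longrightarrow> v j \<bullet> (M *v v l) = (if j = l then 1 else 0)"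
    using E unfolding eigenpairs_def by auto
  obtain h :: "'n \<Rightarrow> nat" where h: "bij_betw h UNIV {0..<?n}"
    using ex_bij_betw_finite_nat[of "UNIV :: 'n set"] by auto
  have hlt: "h a < ?n" for a using h by (auto simp: bij_betw_def)
  have hinj: "h a = h b \<longleftrightarrow> a = b" for a b using h by (auto simp: bij_betw_def inj_def)
  define V :: "real^'n^'n" where "V = (\<chi> i a. v (h a) $ i)"
  have colV: "column a V = v (h a)" for a by (simp add: V_def column_def vec_eq_iff)
  define c where "c = det V * det V"
  have "c * det M = det (transpose V ** M ** V)" unfolding c_def by (simp add: det_mul)
  also have "transpose V ** M ** V = mat 1"
    by (simp add: vec_eq_iff transpose_mult_mult_nth colV Eon hlt hinj mat_def)
  finally have c0: "c \<noteq> 0" by auto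
  have "c * poly (gen_charpoly K M) x = (\<Prod>j<?n. \<mu> j - x)" for x
  proof -
    have diagonal: "(transpose V ** (K - x *\<^sub>R M) ** V) $ a $ b = (if a = b then \<mu> (h a) - x else 0)"
      for a b
      by (simp add: transpose_mult_mult_nth colV matrix_vector_mult_diff_rdistrib
          scaleR_matrix_vector_assoc[symmetric] inner_diff_right Eeig Eon hlt hinj)
    have "c * poly (gen_charpoly K M) x = det (transpose V ** (K - x *\<^sub>R M) ** V)"
      unfolding c_def poly_gen_charpoly by (simp add: det_mul)
    also have "\<dots> = (\<Prod>a\<in>UNIV. \<mu> (h a) - x)"
      by (subst det_diagonal) (auto simp: diagonal)
    also have "\<dots> = (\<Prod>j\<in>{0..<?n}. \<mu> j - x)" by (rule prod.reindex_bij_betw[OF h])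
    finally show ?thesis by (simp add: atLeast0LessThan)
  qed
  then have charpoly: "gen_charpoly K M = smult (1 / c) (\<Prod>j<?n. [:\<mu> j, -1:])"
    using c0 by (intro poly_eq_poly_eq_iff[THEN iffD1] ext) (simp add: poly_prod field_simps)
  have linear_root: "proots [:\<mu> j, -1:] = {#\<mu> j#}" for j
  proof -
    have "[:\<mu> j, -1:] = - [:- \<mu> j, 1:]" by simp
    then show ?thesis by (simp only: proots_uminus proots_linear_factor) simp
  qed
  have "proots (gen_charpoly K M) = (\<Sum>j<?n. {#\<mu> j#})"
    unfolding charpoly using c0 by (subst proots_smult) (auto simp: proots_prod linear_root)
  also have "(\<Sum>j<k. {#\<mu> j#}) = mset (map \<mu> [0..<k])" for k
    by (induction k) auto
  finally show ?thesis .
qed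

lemma gev_eq_eigenpairs:
  fixes K M :: "real^'n^'n"
  assumes "eigenpairs K M CARD('n) v \<mu>" "1 \<le> i" "i \<le> CARD('n)"
  shows "gev K M i = \<mu> (i - 1)"
proof -
  have "sorted (map \<mu> [0..<CARD('n)])"
    using assms(1) by (auto simp: sorted_iff_nth_mono eigenpairs_def)
  then have "sorted_list_of_multiset (proots (gen_charpoly K M)) = map \<mu> [0..<CARD('n)]"
    unfolding proots_gen_charpoly[OF assms(1)] by (metis sorted_list_of_multiset_mset sorted_sort_id)
  then show ?thesis using assms(2,3) unfolding gev_def by simp
qed

lemma gev_mono:
  fixes K M :: "real^'n^'n"
  assumes "sym_mat K" "pd_mat M" "1 \<le> j" "j \<le> l" "l \<le> CARD('n)"
  shows "gev K M j \<le> gev K M l"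
proof -
  obtain v \<mu> where E: "eigenpairs K M CARD('n) v \<mu>" using eigenpairs_exist[OF assms(1,2)] by blast
  then have "\<mu> (j - 1) \<le> \<mu> (l - 1)" using assms(3-5) unfolding eigenpairs_def by auto
  then show ?thesis using gev_eq_eigenpairs[OF E] assms(3-5) by simp
qed

lemma gev_pos:
  fixes K M :: "real^'n^'n"
  assumes pdK: "pd_mat K" and pdM: "pd_mat M" and "1 \<le> i" "i \<le> CARD('n)"
  shows "0 < gev K M i"
proof -
  obtain v \<mu> where E: "eigenpairs K M CARD('n) v \<mu>"
    using eigenpairs_exist pdK pdM by (metis pd_mat_def)
  have p: "i - 1 < CARD('n)" using assms by simp
  have "v (i-1) \<bullet> (K *v v (i-1)) = \<mu> (i-1)" and "v (i-1) \<noteq> 0"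
    using E p unfolding eigenpairs_def by force+
  then have "0 < \<mu> (i-1)" using pdK unfolding pd_mat_def by metis
  then show ?thesis using gev_eq_eigenpairs[OF E assms(3,4)] by simp
qed

section \<open>Monotonicity of the eigenvalues in the mass matrix\<close>

lemma quad_forms_span_eigenpairs:
  fixes K M :: "real^'n^'n"
  assumes E: "eigenpairs K M k v \<mu>" and pk: "p < k"
  shows "(\<Sum>l\<le>p. a l *\<^sub>R v l) \<bullet> (M *v (\<Sum>l\<le>p. a l *\<^sub>R v l)) = (\<Sum>l\<le>p. (a l)\<^sup>2)"
    and "(\<Sum>l\<le>p. a l *\<^sub>R v l) \<bullet> (K *v (\<Sum>l\<le>p. a l *\<^sub>R v l)) = (\<Sum>l\<le>p. (a l)\<^sup>2 * \<mu> l)"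
proof -
  have Eeig: "\<And>j. j < k \<Longrightarrow> K *v v j = \<mu> j *\<^sub>R (M *v v j)"
   and Eon: "\<And>j l. j \<le> p \<Longrightarrow> l \<le> p \<Longrightarrow> v j \<bullet> (M *v v l) = (if j = l then 1 else 0)"
    using E pk unfolding eigenpairs_def by auto
  let ?x = "\<Sum>l\<le>p. a l *\<^sub>R v l"
  have coeff: "v j \<bullet> (M *v ?x) = a j" if "j \<le> p" for j
    using M_orthonormal_sum_coeff[of "{..p}" v M] Eon that by simp
  have "?x \<bullet> (M *v ?x) = (\<Sum>l\<le>p. a l * (v l \<bullet> (M *v ?x)))"
    by (simp add: inner_sum_left)
  also have "\<dots> = (\<Sum>l\<le>p. (a l)\<^sup>2)" by (simp add: coeff power2_eq_square)
  finally show "?x \<bullet> (M *v ?x) = (\<Sum>l\<le>p. (a l)\<^sup>2)" .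
  have "K *v ?x = M *v (\<Sum>l\<le>p. (a l * \<mu> l) *\<^sub>R v l)"
    using pk by (simp add: matrix_vector_sum matrix_vector_mult_scaleR Eeig)
  then have "?x \<bullet> (K *v ?x) = (\<Sum>j\<le>p. a j * (v j \<bullet> (M *v (\<Sum>l\<le>p. (a l * \<mu> l) *\<^sub>R v l))))"
    by (simp add: inner_sum_left)
  also have "\<dots> = (\<Sum>l\<le>p. (a l)\<^sup>2 * \<mu> l)"
    using M_orthonormal_sum_coeff[of "{..p}" v M] Eon by (simp add: power2_eq_square mult.assoc)
  finally show "?x \<bullet> (K *v ?x) = (\<Sum>l\<le>p. (a l)\<^sup>2 * \<mu> l)" .
qed

lemma M_orthonormal_inj_on:
  fixes M :: "real^'n^'n"
  assumes "\<And>j l. j \<in> S \<Longrightarrow> l \<in> S \<Longrightarrow> v j \<bullet> (M *v v l) = (if j = l then 1 else 0)"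
  shows "inj_on v S"
  by (rule inj_onI) (metis assms zero_neq_one)

lemma span_image_eq_sums:
  assumes "inj_on v S" "finite S" "x \<in> span (v ` S)"
  shows "\<exists>a. x = (\<Sum>l\<in>S. a l *\<^sub>R v l)"
proof -
  obtain f where "x = (\<Sum>y\<in>v ` S. f y *\<^sub>R y)" using assms(2,3) by (auto simp: span_finite)
  then have "x = (\<Sum>l\<in>S. f (v l) *\<^sub>R v l)" by (simp add: sum.reindex[OF assms(1)])
  then show ?thesis by (intro exI[of _ "\<lambda>l. f (v l)"])
qed

lemma dim_span_M_orthonormal:
  fixes M :: "real^'n^'n"
  assumes orth: "\<And>j l. j \<le> p \<Longrightarrow> l \<le> p \<Longrightarrow> v j \<bullet> (M *v v l) = (if j = l then 1 else 0)"
  shows "dim (span (v ` {..p})) = Suc p"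
proof -
  have inj: "inj_on v {..p}" by (rule M_orthonormal_inj_on[where M = M]) (simp add: orth)
  have "independent (v ` {..p})"
  proof (rule independent_if_scalars_zero)
    fix f x assume sum0: "(\<Sum>y\<in>v ` {..p}. f y *\<^sub>R y) = 0" and "x \<in> v ` {..p}"
    then obtain j where j: "j \<le> p" "x = v j" by auto
    have "(\<Sum>l\<le>p. f (v l) *\<^sub>R v l) = 0" using sum0 by (simp add: sum.reindex[OF inj])
    then show "f x = 0"
      using M_orthonormal_sum_coeff[of "{..p}" v M j "\<lambda>l. f (v l)"] orth j by simp
  qed simp
  then show ?thesis
    using dim_eq_card_independent[of "v ` {..p}"] card_image[OF inj] by (simp add: dim_span)
qed

text \<open>
  Courant--Fischer: a vector in the span of the first \<open>p + 1\<close> eigenvectors of \<open>(K, M\<^sub>1)\<close>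
  that is \<open>M\<^sub>2\<close>-orthogonal to the first \<open>p\<close> eigenvectors of \<open>(K, M\<^sub>2)\<close> squeezes its
  Rayleigh quotients between \<open>\<lambda>\<^sub>p\<^sub>+\<^sub>1(K, M\<^sub>2)\<close> and \<open>\<lambda>\<^sub>p\<^sub>+\<^sub>1(K, M\<^sub>1)\<close>.
\<close>
lemma gev_le_if_mass_le:
  fixes K M1 M2 :: "real^'n^'n"
  assumes psdK: "psd_mat K" and pd1: "pd_mat M1" and pd2: "pd_mat M2"
    and le: "\<And>x. x \<bullet> (M1 *v x) \<le> c * (x \<bullet> (M2 *v x))"
    and i: "1 \<le> i" "i \<le> CARD('n)"
  shows "gev K M2 i \<le> c * gev K M1 i"
proof -
  have symK: "sym_mat K" using psdK by (simp add: psd_mat_def)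
  have symM2: "sym_mat M2" using pd2 by (simp add: pd_mat_def)
  obtain v \<mu> where E1: "eigenpairs K M1 CARD('n) v \<mu>" using eigenpairs_exist[OF symK pd1] by blast
  obtain w \<nu> where E2: "eigenpairs K M2 CARD('n) w \<nu>" using eigenpairs_exist[OF symK pd2] by blast
  define p where "p = i - 1"
  have pn: "p < CARD('n)" using i unfolding p_def by simp
  have "v p \<bullet> (K *v v p) = \<mu> p" using E1 pn unfolding eigenpairs_def by simp
  then have mu_nonneg: "0 \<le> \<mu> p" using psdK unfolding psd_mat_def by metis
  have "dim (span (v ` {..p})) = Suc p"
    using E1 pn by (intro dim_span_M_orthonormal[where M = M1]) (auto simp: eigenpairs_def)
  then obtain x where "x \<in> span (v ` {..p})" "x \<noteq> 0" and xorth: "\<forall>l<p. (M2 *v w l) \<bullet> x = 0"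
    using subspace_orthogonal_nonzero[of "span (v ` {..p})" p "\<lambda>l. M2 *v w l"] by auto
  moreover have "inj_on v {..p}"
    using E1 pn by (intro M_orthonormal_inj_on[where M = M1]) (auto simp: eigenpairs_def)
  ultimately obtain a where x: "x = (\<Sum>l\<le>p. a l *\<^sub>R v l)"
    using span_image_eq_sums by blast
  have "x \<in> M_complement M2 p w"
    using xorth sym_mat_inner_commute[OF symM2] by (simp add: M_complement_def inner_commute)
  then have "\<nu> p * (x \<bullet> (M2 *v x)) \<le> x \<bullet> (K *v x)" using E2 pn unfolding eigenpairs_def by blast
  also have "x \<bullet> (K *v x) = (\<Sum>l\<le>p. (a l)\<^sup>2 * \<mu> l)"
    unfolding x by (rule quad_forms_span_eigenpairs(2)[OF E1 pn])
  also have "\<dots> \<le> (\<Sum>l\<le>p. (a l)\<^sup>2 * \<mu> p)"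
    using E1 pn by (intro sum_mono mult_left_mono) (auto simp: eigenpairs_def)
  also have "\<dots> = \<mu> p * (x \<bullet> (M1 *v x))"
    unfolding x quad_forms_span_eigenpairs(1)[OF E1 pn] by (simp add: sum_distrib_left mult_ac)
  also have "\<dots> \<le> (c * \<mu> p) * (x \<bullet> (M2 *v x))"
    using mult_left_mono[OF le mu_nonneg] by (simp add: mult_ac)
  finally have "\<nu> p \<le> c * \<mu> p" using pd2 \<open>x \<noteq> 0\<close> by (simp add: pd_mat_def)
  then show ?thesis using gev_eq_eigenpairs[OF E1 i] gev_eq_eigenpairs[OF E2 i] unfolding p_def by simp
qed

lemma sqrt_gev_ratio_bounds:
  fixes K M Mb :: "real^'n^'n"
  assumes pdK: "pd_mat K" and pdM: "pd_mat M" and pdMb: "pd_mat Mb"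
    and lower: "\<And>x. x \<bullet> (M *v x) \<le> x \<bullet> (Mb *v x)"
    and upper: "\<And>x. x \<bullet> (Mb *v x) \<le> C * (x \<bullet> (M *v x))"
    and i: "1 \<le> i" "i \<le> CARD('n)"
  shows "1 \<le> sqrt (gev K M i) / sqrt (gev K Mb i)"
    and "sqrt (gev K M i) / sqrt (gev K Mb i) \<le> sqrt C"
proof -
  have psdK: "psd_mat K" using pdK by (rule pd_mat_imp_psd_mat)
  have pos: "0 < sqrt (gev K Mb i)" using gev_pos[OF pdK pdMb i] by simp
  have "gev K Mb i \<le> 1 * gev K M i"
    using lower by (intro gev_le_if_mass_le[OF psdK pdM pdMb _ i]) simp
  then show "1 \<le> sqrt (gev K M i) / sqrt (gev K Mb i)" using pos by (simp add: le_divide_eq)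
  have "gev K M i \<le> C * gev K Mb i" by (rule gev_le_if_mass_le[OF psdK pdMb pdM upper i])
  then have "sqrt (gev K M i) \<le> sqrt C * sqrt (gev K Mb i)" by (simp add: real_sqrt_mult[symmetric])
  then show "sqrt (gev K M i) / sqrt (gev K Mb i) \<le> sqrt C" using pos by (simp add: divide_le_eq)
qed

section \<open>Assembly\<close>

lemma quad_form_assemble:
  "x \<bullet> (assemble L A *v x) = (\<Sum>e\<in>UNIV. (L e *v x) \<bullet> (A e *v (L e *v (x::real^'n))))"
proof -
  have "assemble L A *v x = (\<Sum>e\<in>UNIV. (A e *v (L e *v x)) v* L e)"
    unfolding assemble_def sum_matrix_vector
    by (rule sum.cong) (simp_all add: matrix_vector_mul_assoc[symmetric])
  moreover have "x \<bullet> (y v* L e) = (L e *v x) \<bullet> y" for e y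
    by (metis dot_lmul_matrix inner_commute)
  ultimately show ?thesis by (simp add: inner_sum_right)
qed

lemma sym_mat_assemble:
  assumes "\<And>e. sym_mat (A e)" shows "sym_mat (assemble L A)"
proof -
  have "transpose (transpose (L e) ** A e ** L e) = transpose (L e) ** A e ** L e" for e
    using assms[of e] by (simp add: matrix_transpose_mul matrix_mul_assoc sym_mat_def)
  then show ?thesis unfolding sym_mat_def assemble_def
    by (simp add: vec_eq_iff transpose_def)
qed

lemma quad_form_assemble_le:
  assumes "\<And>e y. y \<bullet> (A e *v y) \<le> c * (y \<bullet> (B e *v y))"
  shows "x \<bullet> (assemble L A *v x) \<le> c * (x \<bullet> (assemble L B *v x))"
  unfolding quad_form_assemble sum_distrib_left by (intro sum_mono assms)

lemma pd_mat_assemble: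
  fixes L :: "'e::finite \<Rightarrow> real^'n::finite^'m::finite" and A :: "'e \<Rightarrow> real^'m^'m"
  assumes Le: "\<And>e. L e = (\<chi> a b. if b = idx e a then 1 else 0)"
    and cover: "\<And>i. \<exists>e a. idx e a = i"
    and pd: "\<And>e. pd_mat (A e)"
  shows "pd_mat (assemble L A)"
  unfolding pd_mat_def
proof (intro conjI allI impI)
  show "sym_mat (assemble L A)" using pd by (intro sym_mat_assemble) (simp add: pd_mat_def)
  fix x :: "real^'n" assume "x \<noteq> 0"
  then obtain i where i: "x $ i \<noteq> 0" by (metis vec_eq_iff zero_index)
  obtain e a where ea: "idx e a = i" using cover by blast
  have "(L e *v x) $ a = x $ i"
    unfolding Le ea[symmetric]
    by (simp add: matrix_vector_mult_def if_distrib[of "\<lambda>c. c * _"] cong: if_cong)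
  then have "L e *v x \<noteq> 0" using i by auto
  then have "0 < (L e *v x) \<bullet> (A e *v (L e *v x))" using pd[of e] unfolding pd_mat_def by blast
  also have "\<dots> \<le> (\<Sum>e\<in>UNIV. (L e *v x) \<bullet> (A e *v (L e *v x)))"
    by (rule member_le_sum) (auto intro: pd_mat_quad_nonneg pd)
  finally show "0 < x \<bullet> (assemble L A *v x)" unfolding quad_form_assemble .
qed

section \<open>The modified element mass matrix\<close>

lemma outer_matrix_vector: "outer v w *v y = (w \<bullet> y) *\<^sub>R (v::real^'m)"
  by (simp add: vec_eq_iff outer_def matrix_vector_mult_def inner_vec_def sum_distrib_left mult_ac)

lemma quad_form_mod_mass:
  fixes Me :: "real^'m^'m"
  assumes "sym_mat Me"
  shows "y \<bullet> (mod_mass Ke Me r u *v y) = y \<bullet> (Me *v y)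
    + (\<Sum>k\<in>{1..r}. (gev Ke Me (CARD('m) - r + k) / gev Ke Me (CARD('m) - r) - 1) * (u k \<bullet> (Me *v y))\<^sup>2)"
proof -
  have "(Me *v u k) \<bullet> y = u k \<bullet> (Me *v y)" "y \<bullet> (Me *v u k) = u k \<bullet> (Me *v y)" for k
    using sym_mat_inner_commute[OF assms, of "u k" y] by (simp_all add: inner_commute)
  then show ?thesis unfolding mod_mass_def
    by (simp add: matrix_vector_mult_add_rdistrib sum_matrix_vector scaleR_matrix_vector_assoc[symmetric]
        outer_matrix_vector inner_add_right inner_sum_right power2_eq_square mult_ac)
qed

lemma M_orthonormal_bessel:
  fixes M :: "real^'m^'m"
  assumes psdM: "psd_mat M" and "finite S"
    and orth: "\<And>j k. j \<in> S \<Longrightarrow> k \<in> S \<Longrightarrow> u j \<bullet> (M *v u k) = (if j = k then 1 else 0)"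
  shows "(\<Sum>k\<in>S. (u k \<bullet> (M *v y))\<^sup>2) \<le> y \<bullet> (M *v y)"
proof -
  have symM: "sym_mat M" using psdM by (simp add: psd_mat_def)
  define c where "c k = u k \<bullet> (M *v y)" for k
  define s where "s = (\<Sum>k\<in>S. c k *\<^sub>R u k)"
  have "s \<bullet> (M *v y) = (\<Sum>k\<in>S. (c k)\<^sup>2)"
    unfolding s_def by (simp add: inner_sum_left c_def power2_eq_square)
  moreover have "s \<bullet> (M *v s) = (\<Sum>k\<in>S. (c k)\<^sup>2)"
    unfolding s_def using M_orthonormal_sum_coeff[of S u M] orth \<open>finite S\<close>
    by (simp add: inner_sum_left power2_eq_square)
  moreover have "0 \<le> (y + (-1) *\<^sub>R s) \<bullet> (M *v (y + (-1) *\<^sub>R s))"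
    using psdM by (simp add: psd_mat_def)
  ultimately show ?thesis unfolding quad_form_add_scaleR[OF symM] c_def by simp
qed

lemma mod_mass_bounds:
  fixes Ke Me :: "real^'m^'m" and u :: "nat \<Rightarrow> real^'m" and r :: nat
  defines "\<rho> \<equiv> gev Ke Me CARD('m) / gev Ke Me (CARD('m) - r)"
  assumes symK: "sym_mat Ke" and pdM: "pd_mat Me" and r: "r < CARD('m)"
    and pos: "0 < gev Ke Me (CARD('m) - r)"
    and orth: "\<And>j k. j \<in> {1..r} \<Longrightarrow> k \<in> {1..r} \<Longrightarrow> u j \<bullet> (Me *v u k) = (if j = k then 1 else 0)"
  shows "sym_mat (mod_mass Ke Me r u)"
    and "y \<bullet> (Me *v y) \<le> y \<bullet> (mod_mass Ke Me r u *v y)"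
    and "y \<bullet> (mod_mass Ke Me r u *v y) \<le> \<rho> * (y \<bullet> (Me *v y))"
proof -
  define g where "g k = gev Ke Me (CARD('m) - r + k) / gev Ke Me (CARD('m) - r) - 1" for k
  define c where "c k = u k \<bullet> (Me *v y)" for k
  have symM: "sym_mat Me" using pdM by (simp add: pd_mat_def)
  show "sym_mat (mod_mass Ke Me r u)"
    using symM unfolding mod_mass_def sym_mat_def
    by (simp add: vec_eq_iff transpose_def outer_def mult.commute)
  have quad: "y \<bullet> (mod_mass Ke Me r u *v y) = y \<bullet> (Me *v y) + (\<Sum>k\<in>{1..r}. g k * (c k)\<^sup>2)"
    unfolding g_def c_def by (rule quad_form_mod_mass[OF symM])
  have g: "0 \<le> g k \<and> g k \<le> \<rho> - 1" if "k \<in> {1..r}" for k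
  proof -
    have "gev Ke Me (CARD('m) - r) \<le> gev Ke Me (CARD('m) - r + k)"
      and "gev Ke Me (CARD('m) - r + k) \<le> gev Ke Me CARD('m)"
      using that r by (auto intro: gev_mono[OF symK pdM])
    then show ?thesis using pos unfolding g_def \<rho>_def by (simp add: le_divide_eq divide_right_mono)
  qed
  have "gev Ke Me (CARD('m) - r) \<le> gev Ke Me CARD('m)" using r by (intro gev_mono[OF symK pdM]) auto
  then have rho: "1 \<le> \<rho>" using pos unfolding \<rho>_def by (simp add: le_divide_eq)
  have "0 \<le> (\<Sum>k\<in>{1..r}. g k * (c k)\<^sup>2)" using g by (intro sum_nonneg) simp
  then show "y \<bullet> (Me *v y) \<le> y \<bullet> (mod_mass Ke Me r u *v y)" unfolding quad by simp
  have "(\<Sum>k\<in>{1..r}. g k * (c k)\<^sup>2) \<le> (\<rho> - 1) * (\<Sum>k\<in>{1..r}. (c k)\<^sup>2)"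
    unfolding sum_distrib_left using g by (intro sum_mono mult_right_mono) auto
  also have "\<dots> \<le> (\<rho> - 1) * (y \<bullet> (Me *v y))"
    using rho M_orthonormal_bessel[OF pd_mat_imp_psd_mat[OF pdM] _ orth, of "{1..r}"] unfolding c_def
    by (intro mult_left_mono) auto
  finally show "y \<bullet> (mod_mass Ke Me r u *v y) \<le> \<rho> * (y \<bullet> (Me *v y))"
    unfolding quad by (simp add: algebra_simps)
qed

lemma ratio_le_Max_sqrt_ratio_squared:
  fixes a b :: "'e::finite \<Rightarrow> real"
  assumes "\<And>e. 0 < b e" "\<And>e. b e \<le> a e"
  shows "a e / b e \<le> (MAX e. sqrt (a e) / sqrt (b e))\<^sup>2"
    and "0 \<le> (MAX e. sqrt (a e) / sqrt (b e))"
proof -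
  have nonneg: "0 \<le> sqrt (a e) / sqrt (b e)" and "a e / b e = (sqrt (a e) / sqrt (b e))\<^sup>2"
    using assms[of e] by (simp_all add: power_divide)
  moreover have le: "sqrt (a e) / sqrt (b e) \<le> (MAX e. sqrt (a e) / sqrt (b e))" by (rule Max_ge) auto
  ultimately show "a e / b e \<le> (MAX e. sqrt (a e) / sqrt (b e))\<^sup>2" by (simp add: power_mono)
  show "0 \<le> (MAX e. sqrt (a e) / sqrt (b e))" using nonneg le by (rule order_trans)
qed

theorem mainTheorem4:
  fixes L :: "'e::finite \<Rightarrow> real^'n::finite^'m::finite"
    and Ke Me :: "'e \<Rightarrow> real^'m^'m"
    and r :: nat
    and u :: "'e \<Rightarrow> nat \<Rightarrow> real^'m"
  assumes L_struct: "\<exists>idx :: 'e \<Rightarrow> 'm \<Rightarrow> 'n.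
              (\<forall>e. inj (idx e) \<and> L e = (\<chi> a b. if b = idx e a then 1 else 0))
            \<and> (\<forall>i. \<exists>e a. idx e a = i)"
    and Ke_psd: "\<And>e. psd_mat (Ke e)"
    and K_pd: "pd_mat (assemble L Ke)"
    and Me_pd: "\<And>e. pd_mat (Me e)"
    and r_pos: "0 < r" and r_lt: "r < CARD('m)"
    and lam_pos: "\<And>e. gev (Ke e) (Me e) (CARD('m) - r) > 0"
    and u_eig: "\<And>e k. k \<in> {1..r} \<Longrightarrow>
              Ke e *v u e k = gev (Ke e) (Me e) (CARD('m) - r + k) *\<^sub>R (Me e *v u e k)"
    and u_orth: "\<And>e j k. j \<in> {1..r} \<Longrightarrow> k \<in> {1..r} \<Longrightarrow>
              u e j \<bullet> (Me e *v u e k) = (if j = k then 1 else 0)"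
  shows "\<forall>i\<in>{1..CARD('n)}.
      let K = assemble L Ke;
          M = assemble L Me;
          Mbar = assemble L (\<lambda>e. mod_mass (Ke e) (Me e) r (u e));
          \<omega> = sqrt (gev K M i);
          \<omega>bar = sqrt (gev K Mbar i)
      in 1 \<le> \<omega> / \<omega>bar \<and>
         \<omega> / \<omega>bar \<le> (MAX e. sqrt (gev (Ke e) (Me e) (CARD('m))) / sqrt (gev (Ke e) (Me e) (CARD('m) - r)))"
proof -
  define R where "R = (MAX e. sqrt (gev (Ke e) (Me e) CARD('m)) / sqrt (gev (Ke e) (Me e) (CARD('m) - r)))"
  define Mbar where "Mbar = assemble L (\<lambda>e. mod_mass (Ke e) (Me e) r (u e))"
  obtain idx where Le: "\<And>e. L e = (\<chi> a b. if b = idx e a then 1 else 0)"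
    and cover: "\<And>i. \<exists>e a. idx e a = i" using L_struct by blast
  have symK: "sym_mat (Ke e)" for e using Ke_psd by (simp add: psd_mat_def)
  note elem = mod_mass_bounds[OF symK Me_pd r_lt lam_pos u_orth]
  have "gev (Ke e) (Me e) (CARD('m) - r) \<le> gev (Ke e) (Me e) CARD('m)" for e
    using r_lt by (intro gev_mono[OF symK Me_pd]) auto
  note R_bounds = ratio_le_Max_sqrt_ratio_squared[where a = "\<lambda>e. gev (Ke e) (Me e) CARD('m)"
      and b = "\<lambda>e. gev (Ke e) (Me e) (CARD('m) - r)", OF lam_pos this, folded R_def]
  have pdM: "pd_mat (assemble L Me)" by (rule pd_mat_assemble[OF Le cover Me_pd])
  have lower: "x \<bullet> (assemble L Me *v x) \<le> x \<bullet> (Mbar *v x)" for x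
    using quad_form_assemble_le[of Me 1 "\<lambda>e. mod_mass (Ke e) (Me e) r (u e)"] elem(2)
    unfolding Mbar_def by simp
  have upper: "x \<bullet> (Mbar *v x) \<le> R\<^sup>2 * (x \<bullet> (assemble L Me *v x))" for x
    unfolding Mbar_def using elem(3) R_bounds(1) pd_mat_quad_nonneg[OF Me_pd]
    by (intro quad_form_assemble_le) (meson mult_right_mono order_trans)
  have pdMbar: "pd_mat Mbar"
    using elem(1) lower by (intro pd_mat_if_quad_ge[OF _ pdM]) (simp_all add: Mbar_def sym_mat_assemble)
  show ?thesis
    using sqrt_gev_ratio_bounds[OF K_pd pdM pdMbar lower upper] R_bounds(2)
    unfolding Let_def Mbar_def R_def by auto
qed

end
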